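(* Let $M,K\in\mathbb R^{n\times n}$ be symmetric positive definite, $\nu>0$, $\omega\ge0$, and \[ \mathcal M=\begin{bmatrix}M&\sqrt\nu(K-i\omega M)\\\sqrt\nu(K+i\omega M)&-M\end{bmatrix}\in\mathbb C^{2n\times2n}. \] (1) For $\mathcal P=\mathrm{diag}(P,P)$ with any real symmetric positive definite $P\in\mathbb R^{n\times n}$, the spectrum of $\mathcal P^{-1}\mathcal M$ is real and symmetric with respect to zero. (2) For $P=M+\sqrt\nu(K+\omega M)$ and $\mathcal P=\mathrm{diag}(P,P)$, the inf-sup constant $\gamma=\inf_{0\ne x}\sup_{0\ne w}\frac{|\langle\mathcal Mx,w\rangle|}{\|x\|_{\mathcal P}\|w\|_{\mathcal P}}$ and the norm $\|\mathcal B\|=\sup_{0\ne x}\sup_{0\ne w}\frac{|\langle\mathcal Mx,w\rangle|}{\|x\|_{\mathcal P}\|w\|_{\mathcal P}}$ satisfy \[ \gamma\ge\frac1{\sqrt3},\qquad\|\mathcal B\|\le1. \] Consequently every eigenvalue of $\mathcal P^{-1}\mathcal M$ lies in $[-1,-1/\sqrt3]\cup[1/\sqrt3,1]$.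
   Context: $\langle z,w\rangle=w^*z$ on $\mathbb C^{2n}$ and $\|x\|_{\mathcal P}=\langle\mathcal Px,x\rangle^{1/2}$; $x,w$ range over $\mathbb C^{2n}$. *)

theory Defs
  imports "Jordan_Normal_Form.Char_Poly" "Jordan_Normal_Form.Gauss_Jordan_Elimination"
begin

definition spd_real :: "nat \<Rightarrow> real mat \<Rightarrow> bool" where
  "spd_real n A \<longleftrightarrow> A \<in> carrier_mat n n \<and> transpose_mat A = A \<and>
     (\<forall>x \<in> carrier_vec n. x \<noteq> 0\<^sub>v n \<longrightarrow> x \<bullet> (A *\<^sub>v x) > 0)"

definition cmat :: "real mat \<Rightarrow> complex mat" where
  "cmat A = map_mat complex_of_real A"

definition calM :: "nat \<Rightarrow> real \<Rightarrow> real \<Rightarrow> real mat \<Rightarrow> real mat \<Rightarrow> complex mat" where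
  "calM n \<nu> \<omega> M K = four_block_mat
      (cmat M)
      (complex_of_real (sqrt \<nu>) \<cdot>\<^sub>m (cmat K - (\<i> * complex_of_real \<omega>) \<cdot>\<^sub>m cmat M))
      (complex_of_real (sqrt \<nu>) \<cdot>\<^sub>m (cmat K + (\<i> * complex_of_real \<omega>) \<cdot>\<^sub>m cmat M))
      (- cmat M)"

definition calP :: "nat \<Rightarrow> real mat \<Rightarrow> complex mat" where
  "calP n P = four_block_mat (cmat P) (0\<^sub>m n n) (0\<^sub>m n n) (cmat P)"

definition minv :: "complex mat \<Rightarrow> complex mat" where
  "minv A = the (mat_inverse A)"

definition cinner :: "complex vec \<Rightarrow> complex vec \<Rightarrow> complex" where
  "cinner z w = z \<bullet>c w"

definition pnorm :: "complex mat \<Rightarrow> complex vec \<Rightarrow> real" where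
  "pnorm Pm x = sqrt (Re (cinner (Pm *\<^sub>v x) x))"

definition ratio :: "complex mat \<Rightarrow> complex mat \<Rightarrow> complex vec \<Rightarrow> complex vec \<Rightarrow> real" where
  "ratio A Pm x w = cmod (cinner (A *\<^sub>v x) w) / (pnorm Pm x * pnorm Pm w)"

definition nzvecs :: "nat \<Rightarrow> complex vec set" where
  "nzvecs m = {x \<in> carrier_vec m. x \<noteq> 0\<^sub>v m}"

definition infsup_const :: "nat \<Rightarrow> complex mat \<Rightarrow> complex mat \<Rightarrow> real" where
  "infsup_const m A Pm = (INF x \<in> nzvecs m. SUP w \<in> nzvecs m. ratio A Pm x w)"

definition bnorm :: "nat \<Rightarrow> complex mat \<Rightarrow> complex mat \<Rightarrow> real" where
  "bnorm m A Pm = (SUP x \<in> nzvecs m. SUP w \<in> nzvecs m. ratio A Pm x w)"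

end

theory Submission
  imports Defs
begin

(* Write \<M> = calM and \<P> = calP = diag(P, P), and split x = (x1, x2), w = (w1, w2).
   Since M, K and P are real symmetric, every block term of <\<M> x, w> and <\<P> x, w> is a value of
   one of the Hermitian forms (y, z) |-> z^* A y of A = M, K, P on the halves of x and w.
   (1) <\<M> x, x> is real and <\<P> x, x> > 0, so every eigenvalue z of \<P>^-1 \<M>, i.e. every z
       with \<M> v = z \<P> v for some v <> 0, is real.  The conjugating swap
       J(v1, v2) = (conj v2, - conj v1) satisfies <\<M> Jv, w> = conj <\<M> v, Jw> and
       <\<P> Jv, w> = - conj <\<P> v, Jw>, so it maps an eigenvector for z to one for -z.
   (2) For P = M + sqrt nu (K + omega M), Cauchy-Schwarz for the forms of M and K gives
       |<\<M> x, w>| <= ||x||_\<P> ||w||_\<P>, and the test vector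
       W x = (x1 + (1 - i) x2, (1 + i) x1 - x2) satisfies Re <\<M> x, Wx> = ||x||_\<P>^2 and
       ||Wx||_\<P>^2 = 3 ||x||_\<P>^2; this gives the norm bound 1 and the inf-sup bound 1/sqrt 3.
   For an eigenpair, |<\<M> v, w>| / (||v||_\<P> ||w||_\<P>) <= |z| with equality at w = v, so both
   bounds transfer to the eigenvalues. *)

definition sesq :: "nat \<Rightarrow> complex mat \<Rightarrow> (nat \<Rightarrow> complex) \<Rightarrow> (nat \<Rightarrow> complex) \<Rightarrow> complex" where
  "sesq n A x y = (\<Sum>i<n. \<Sum>j<n. cnj (y i) * A $$ (i,j) * x j)"

lemma sesq_cong:
  assumes "\<And>i. i < n \<Longrightarrow> x i = x' i" "\<And>i. i < n \<Longrightarrow> y i = y' i"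
  shows "sesq n A x y = sesq n A x' y'"
  unfolding sesq_def using assms by (intro sum.cong refl) auto

lemma sesq_matrix_lincomb:
  assumes "\<And>i j. i < n \<Longrightarrow> j < n \<Longrightarrow> Q $$ (i,j) = a * A $$ (i,j) + b * B $$ (i,j)"
  shows "sesq n Q x y = a * sesq n A x y + b * sesq n B x y"
  unfolding sesq_def sum_distrib_left sum.distrib[symmetric]
  using assms by (intro sum.cong refl) (auto simp: algebra_simps)

lemma sesq_linear_left:
  "sesq n A (\<lambda>i. a * x i + b * y i) z = a * sesq n A x z + b * sesq n A y z"
  unfolding sesq_def sum_distrib_left sum.distrib[symmetric]
  by (intro sum.cong refl) (auto simp: algebra_simps)

lemma sesq_antilinear_right:
  "sesq n A z (\<lambda>i. a * x i + b * y i) = cnj a * sesq n A z x + cnj b * sesq n A z y"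
  unfolding sesq_def sum_distrib_left sum.distrib[symmetric]
  by (intro sum.cong refl) (auto simp: algebra_simps)

lemma sesq_uminus_left: "sesq n A (\<lambda>i. - x i) y = - sesq n A x y"
  using sesq_linear_left[of n A "-1" x 0 x y] by simp

lemma sesq_uminus_right: "sesq n A x (\<lambda>i. - y i) = - sesq n A x y"
  using sesq_antilinear_right[of n A x "-1" y 0 y] by simp

definition sym_real :: "nat \<Rightarrow> real mat \<Rightarrow> bool" where
  "sym_real n A \<longleftrightarrow> A \<in> carrier_mat n n \<and> (\<forall>i<n. \<forall>j<n. A $$ (i,j) = A $$ (j,i))"

lemma spd_real_carrier: "spd_real n A \<Longrightarrow> A \<in> carrier_mat n n"
  unfolding spd_real_def by simp

lemma spd_real_sym: "spd_real n A \<Longrightarrow> sym_real n A"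
  unfolding spd_real_def sym_real_def by (metis carrier_matD index_transpose_mat(1))

lemma cmat_carrier [simp]: "A \<in> carrier_mat n n \<Longrightarrow> cmat A \<in> carrier_mat n n"
  unfolding cmat_def by auto

lemma cmat_index:
  "A \<in> carrier_mat n n \<Longrightarrow> i < n \<Longrightarrow> j < n \<Longrightarrow> cmat A $$ (i,j) = complex_of_real (A $$ (i,j))"
  unfolding cmat_def by auto

lemma sesq_hermitian:
  assumes "sym_real n A"
  shows "sesq n (cmat A) x y = cnj (sesq n (cmat A) y x)"
proof -
  have "sesq n (cmat A) y x = (\<Sum>i<n. \<Sum>j<n. cnj (x j) * cmat A $$ (j,i) * y i)"
    unfolding sesq_def by (rule sum.swap)
  then show ?thesis using assms unfolding sesq_def sym_real_def
    by (auto simp: cmat_index intro!: sum.cong)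
qed

lemma sesq_diag_real:
  assumes "sym_real n A"
  shows "sesq n (cmat A) x x = complex_of_real (Re (sesq n (cmat A) x x))"
  using sesq_hermitian[OF assms, of x x] by (simp add: complex_eq_iff)

lemma sesq_diag_Im:
  assumes "sym_real n A"
  shows "Im (sesq n (cmat A) x x) = 0"
  using arg_cong[OF sesq_diag_real[OF assms, of x], of Im] by simp

lemma sesq_conj:
  assumes "A \<in> carrier_mat n n"
  shows "sesq n (cmat A) (\<lambda>i. cnj (x i)) y = cnj (sesq n (cmat A) x (\<lambda>i. cnj (y i)))"
  unfolding sesq_def using assms by (auto simp: cmat_index intro!: sum.cong)

lemma quadratic_form_sum:
  assumes "A \<in> carrier_mat n n" "a \<in> carrier_vec n"
  shows "a \<bullet> (A *\<^sub>v a) = (\<Sum>i<n. \<Sum>j<n. a $ i * A $$ (i,j) * a $ j)"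
proof -
  have "a \<bullet> (A *\<^sub>v a) = (\<Sum>i<n. a $ i * (\<Sum>j<n. A $$ (i,j) * a $ j))"
    unfolding scalar_prod_def using assms
    by (intro sum.cong) (auto simp: atLeast0LessThan scalar_prod_def)
  then show ?thesis by (simp add: sum_distrib_left mult.assoc)
qed

text \<open>On complex vectors, the energy of a real matrix is the sum of the energies of the real and the
  imaginary part; this transfers positive definiteness from real to complex vectors.\<close>
lemma sesq_diag_Re:
  assumes "A \<in> carrier_mat n n"
  shows "Re (sesq n (cmat A) x x) = vec n (\<lambda>i. Re (x i)) \<bullet> (A *\<^sub>v vec n (\<lambda>i. Re (x i)))
     + vec n (\<lambda>i. Im (x i)) \<bullet> (A *\<^sub>v vec n (\<lambda>i. Im (x i)))"
proof -
  have "Re (sesq n (cmat A) x x) = (\<Sum>i<n. \<Sum>j<n. Re (x i) * A $$ (i,j) * Re (x j)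
      + Im (x i) * A $$ (i,j) * Im (x j))"
    unfolding sesq_def Re_sum by (intro sum.cong refl) (simp add: cmat_index[OF assms] algebra_simps)
  then show ?thesis
    unfolding quadratic_form_sum[OF assms vec_carrier] by (simp add: sum.distrib)
qed

lemma spd_real_nonneg: "spd_real n A \<Longrightarrow> a \<in> carrier_vec n \<Longrightarrow> a \<bullet> (A *\<^sub>v a) \<ge> 0"
  unfolding spd_real_def by (cases "a = 0\<^sub>v n") (auto simp: less_le)

lemma sesq_diag_nonneg:
  assumes "spd_real n A"
  shows "Re (sesq n (cmat A) x x) \<ge> 0"
  unfolding sesq_diag_Re[OF spd_real_carrier[OF assms]]
  using spd_real_nonneg[OF assms] by (intro add_nonneg_nonneg) auto

lemma sesq_diag_pos:
  assumes "spd_real n A" "i < n" "x i \<noteq> 0"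
  shows "Re (sesq n (cmat A) x x) > 0"
proof -
  let ?a = "vec n (\<lambda>i. Re (x i))" and ?b = "vec n (\<lambda>i. Im (x i))"
  have "?a $ i \<noteq> 0 \<or> ?b $ i \<noteq> 0" using assms(2,3) by (auto simp: complex_eq_iff)
  then have "?a \<noteq> 0\<^sub>v n \<or> ?b \<noteq> 0\<^sub>v n"
    using assms(2) by (auto dest!: arg_cong[where f = "\<lambda>v. v $ i"])
  then have "?a \<bullet> (A *\<^sub>v ?a) > 0 \<or> ?b \<bullet> (A *\<^sub>v ?b) > 0"
    using assms(1) unfolding spd_real_def by auto
  moreover have "?a \<bullet> (A *\<^sub>v ?a) \<ge> 0" "?b \<bullet> (A *\<^sub>v ?b) \<ge> 0"
    using spd_real_nonneg[OF assms(1)] by auto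
  ultimately show ?thesis unfolding sesq_diag_Re[OF spd_real_carrier[OF assms(1)]] by linarith
qed

text \<open>A real quadratic \<open>a - 2 r d + r\<^sup>2 d b\<close> that is nonnegative for all \<open>r\<close> has \<open>d \<le> a b\<close>
  (the discriminant argument behind Cauchy--Schwarz, including the degenerate case \<open>b = 0\<close>).\<close>
lemma quadratic_nonneg_imp_le:
  fixes a b d :: real
  assumes "d \<ge> 0" "b \<ge> 0" and nonneg: "\<And>r. 0 \<le> a - 2 * r * d + r\<^sup>2 * d * b"
  shows "d \<le> a * b"
proof (cases "b > 0")
  case True
  have "0 \<le> a - 2 * (1 / b) * d + (1 / b)\<^sup>2 * d * b" by (rule nonneg)
  then have "0 \<le> a - d / b" using True by (simp add: power2_eq_square field_simps)
  then show ?thesis using True by (simp add: field_simps)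
next
  case False
  then have b0: "b = 0" using assms(2) by simp
  show ?thesis
  proof (rule ccontr)
    assume "\<not> d \<le> a * b"
    then have d: "d > 0" using b0 by simp
    have "0 \<le> a - 2 * ((a + 1) / (2 * d)) * d" using nonneg[of "(a + 1) / (2 * d)"] b0 by simp
    then show False using d by simp
  qed
qed

lemma sesq_cauchy_schwarz:
  assumes A: "spd_real n A"
  shows "cmod (sesq n (cmat A) x y)
    \<le> sqrt (Re (sesq n (cmat A) x x)) * sqrt (Re (sesq n (cmat A) y y))"
proof -
  have S: "sym_real n A" by (rule spd_real_sym[OF A])
  let ?s = "sesq n (cmat A)"
  define a b c where "a = Re (?s x x)" and "b = Re (?s y y)" and "c = ?s x y"
  have xx: "?s x x = of_real a" unfolding a_def by (rule sesq_diag_real[OF S])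
  have yy: "?s y y = of_real b" unfolding b_def by (rule sesq_diag_real[OF S])
  have yx: "?s y x = cnj c" unfolding c_def by (rule sesq_hermitian[OF S])
  have "(cmod c)\<^sup>2 \<le> a * b"
  proof (rule quadratic_nonneg_imp_le)
    show "0 \<le> b" unfolding b_def by (rule sesq_diag_nonneg[OF A])
    fix r :: real
    define z where "z = (\<lambda>i. 1 * x i + (- (of_real r * c)) * y i)"
    have "?s z z = (?s x x + cnj (- (of_real r * c)) * ?s x y)
        + (- (of_real r * c)) * (?s y x + cnj (- (of_real r * c)) * ?s y y)"
      unfolding z_def sesq_linear_left sesq_antilinear_right by simp
    also have "\<dots> = of_real (a - 2 * r * (cmod c)\<^sup>2 + r\<^sup>2 * (cmod c)\<^sup>2 * b)"
      unfolding xx yy yx c_def[symmetric] cmod_power2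
      by (simp add: complex_eq_iff power2_eq_square algebra_simps)
    finally show "0 \<le> a - 2 * r * (cmod c)\<^sup>2 + r\<^sup>2 * (cmod c)\<^sup>2 * b"
      using sesq_diag_nonneg[OF A, of z] by simp
  qed simp
  then have "cmod c \<le> sqrt (a * b)" by (simp add: real_le_rsqrt)
  then show ?thesis unfolding a_def b_def c_def by (simp add: real_sqrt_mult)
qed

lemma sum_lessThan_double: "(\<Sum>i<2*(n::nat). f i) = (\<Sum>i<n. f i) + (\<Sum>i<n. f (n+i))"
proof -
  have "(\<Sum>i<2*n. f i) = sum f {0..<n} + sum f {n..<2*n}"
    by (simp add: lessThan_atLeast0 sum.atLeastLessThan_concat)
  also have "sum f {n..<2*n} = sum f {0+n..<n+n}" by (simp add: mult_2)
  also have "\<dots> = (\<Sum>i<n. f (n+i))"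
    using sum.atLeastLessThan_shift_bounds[of f 0 n n] by (simp add: lessThan_atLeast0 comp_def)
  finally show ?thesis by (simp add: lessThan_atLeast0)
qed

lemma cinner_four_block:
  assumes A: "A \<in> carrier_mat n n" and B: "B \<in> carrier_mat n n"
    and C: "C \<in> carrier_mat n n" and D: "D \<in> carrier_mat n n"
    and x: "x \<in> carrier_vec (2*n)" and w: "w \<in> carrier_vec (2*n)"
  shows "cinner (four_block_mat A B C D *\<^sub>v x) w =
     sesq n A (\<lambda>i. x$i) (\<lambda>i. w$i) + sesq n B (\<lambda>i. x$(n+i)) (\<lambda>i. w$i)
   + sesq n C (\<lambda>i. x$i) (\<lambda>i. w$(n+i)) + sesq n D (\<lambda>i. x$(n+i)) (\<lambda>i. w$(n+i))"
proof -
  let ?F = "four_block_mat A B C D"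
  have dims: "dim_row ?F = 2*n" "dim_col ?F = 2*n" "dim_vec x = 2*n" "dim_vec w = 2*n"
    using A D x w by (auto simp: mult_2)
  have Fx: "(?F *\<^sub>v x) $ i = (\<Sum>j<2*n. ?F $$ (i,j) * x $ j)" if "i < 2*n" for i
    using that dims by (simp add: scalar_prod_def lessThan_atLeast0)
  have upper: "(?F *\<^sub>v x) $ i = (\<Sum>j<n. A $$ (i,j) * x $ j) + (\<Sum>j<n. B $$ (i,j) * x $ (n+j))"
    if "i < n" for i
    using Fx[of i] that A B C D by (simp add: sum_lessThan_double)
  have lower: "(?F *\<^sub>v x) $ (n+i) = (\<Sum>j<n. C $$ (i,j) * x $ j) + (\<Sum>j<n. D $$ (i,j) * x $ (n+j))"
    if "i < n" for i
    using Fx[of "n+i"] that A B C D by (simp add: sum_lessThan_double)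
  have "cinner (?F *\<^sub>v x) w = (\<Sum>i<2*n. (?F *\<^sub>v x) $ i * cnj (w $ i))"
    unfolding cinner_def scalar_prod_def using dims by (simp add: lessThan_atLeast0)
  also have "\<dots> = (\<Sum>i<n. (?F *\<^sub>v x) $ i * cnj (w $ i))
      + (\<Sum>i<n. (?F *\<^sub>v x) $ (n+i) * cnj (w $ (n+i)))"
    by (rule sum_lessThan_double)
  also have "\<dots> = sesq n A (\<lambda>i. x$i) (\<lambda>i. w$i) + sesq n B (\<lambda>i. x$(n+i)) (\<lambda>i. w$i)
      + sesq n C (\<lambda>i. x$i) (\<lambda>i. w$(n+i)) + sesq n D (\<lambda>i. x$(n+i)) (\<lambda>i. w$(n+i))"
    unfolding sesq_def using upper lower
    by (simp add: sum_distrib_left sum_distrib_right sum.distrib algebra_simps)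
  finally show ?thesis .
qed

lemma calM_carrier:
  "M \<in> carrier_mat n n \<Longrightarrow> K \<in> carrier_mat n n \<Longrightarrow> calM n \<nu> \<omega> M K \<in> carrier_mat (2*n) (2*n)"
  unfolding calM_def mult_2 by (rule four_block_carrier_mat) auto

lemma calP_carrier: "P \<in> carrier_mat n n \<Longrightarrow> calP n P \<in> carrier_mat (2*n) (2*n)"
  unfolding calP_def mult_2 by (rule four_block_carrier_mat) auto

lemma cinner_calM:
  assumes M: "M \<in> carrier_mat n n" and K: "K \<in> carrier_mat n n"
    and x: "x \<in> carrier_vec (2*n)" and w: "w \<in> carrier_vec (2*n)"
  shows "cinner (calM n \<nu> \<omega> M K *\<^sub>v x) w =
     sesq n (cmat M) (\<lambda>i. x$i) (\<lambda>i. w$i)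
   + (of_real (sqrt \<nu>) * sesq n (cmat K) (\<lambda>i. x$(n+i)) (\<lambda>i. w$i)
      + (- of_real (sqrt \<nu>) * \<i> * of_real \<omega>) * sesq n (cmat M) (\<lambda>i. x$(n+i)) (\<lambda>i. w$i))
   + (of_real (sqrt \<nu>) * sesq n (cmat K) (\<lambda>i. x$i) (\<lambda>i. w$(n+i))
      + (of_real (sqrt \<nu>) * \<i> * of_real \<omega>) * sesq n (cmat M) (\<lambda>i. x$i) (\<lambda>i. w$(n+i)))
   - sesq n (cmat M) (\<lambda>i. x$(n+i)) (\<lambda>i. w$(n+i))"
proof -
  let ?t = "complex_of_real (sqrt \<nu>)" and ?o = "\<i> * complex_of_real \<omega>"
  have cK: "cmat K \<in> carrier_mat n n" and cM: "cmat M \<in> carrier_mat n n" using M K by auto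
  have upper_right: "sesq n (?t \<cdot>\<^sub>m (cmat K - ?o \<cdot>\<^sub>m cmat M)) y z
      = ?t * sesq n (cmat K) y z + (- ?t * \<i> * of_real \<omega>) * sesq n (cmat M) y z" for y z
    by (rule sesq_matrix_lincomb) (use cK cM in \<open>auto simp: algebra_simps\<close>)
  have lower_left: "sesq n (?t \<cdot>\<^sub>m (cmat K + ?o \<cdot>\<^sub>m cmat M)) y z
      = ?t * sesq n (cmat K) y z + (?t * \<i> * of_real \<omega>) * sesq n (cmat M) y z" for y z
    by (rule sesq_matrix_lincomb) (use cK cM in \<open>auto simp: algebra_simps\<close>)
  have lower_right: "sesq n (- cmat M) y z = (-1) * sesq n (cmat M) y z + 0 * sesq n (cmat M) y z"
    for y z
    by (rule sesq_matrix_lincomb) (use cM in auto)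
  show ?thesis unfolding calM_def
    by (subst cinner_four_block[OF cM _ _ _ x w])
      (use cK cM in \<open>auto simp: upper_right lower_left lower_right\<close>)
qed

lemma cinner_calP:
  assumes P: "P \<in> carrier_mat n n"
    and x: "x \<in> carrier_vec (2*n)" and w: "w \<in> carrier_vec (2*n)"
  shows "cinner (calP n P *\<^sub>v x) w =
     sesq n (cmat P) (\<lambda>i. x$i) (\<lambda>i. w$i) + sesq n (cmat P) (\<lambda>i. x$(n+i)) (\<lambda>i. w$(n+i))"
proof -
  have cP: "cmat P \<in> carrier_mat n n" using P by auto
  have zero: "sesq n (0\<^sub>m n n) y z = 0 * sesq n (cmat P) y z + 0 * sesq n (cmat P) y z" for y z
    by (rule sesq_matrix_lincomb) auto
  show ?thesis unfolding calP_def
    by (subst cinner_four_block[OF cP _ _ cP x w]) (auto simp: zero)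
qed

lemma sqrt_mult_add_le:
  fixes a c A B C D :: real
  assumes a: "a \<le> sqrt A * sqrt B" and c: "c \<le> sqrt C * sqrt D"
    and nonneg: "A \<ge> 0" "B \<ge> 0" "C \<ge> 0" "D \<ge> 0"
  shows "a + c \<le> sqrt (A + C) * sqrt (B + D)"
proof -
  let ?u = "sqrt A * sqrt B + sqrt C * sqrt D"
  have "(A + C) * (B + D) - ?u\<^sup>2 = (sqrt A * sqrt D - sqrt C * sqrt B)\<^sup>2"
    using nonneg by (simp add: power2_eq_square algebra_simps)
  then have "?u\<^sup>2 \<le> (A + C) * (B + D)" by (smt (verit) zero_le_power2)
  then have "?u \<le> sqrt ((A + C) * (B + D))" by (simp add: real_le_rsqrt)
  then show ?thesis using a c by (simp add: real_sqrt_mult)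
qed

lemma sqrt_mult_scale:
  fixes a A B t :: real
  assumes "a \<le> sqrt A * sqrt B" "t \<ge> 0"
  shows "t * a \<le> sqrt (t * A) * sqrt (t * B)"
proof -
  have "t * a \<le> t * (sqrt A * sqrt B)" using assms by (rule mult_left_mono)
  also have "\<dots> = sqrt (t * A) * sqrt (t * B)"
    using assms(2) by (simp add: real_sqrt_mult algebra_simps)
  finally show ?thesis .
qed

lemma calP_energy:
  assumes P: "spd_real n P" and x: "x \<in> carrier_vec (2*n)"
  shows "Re (cinner (calP n P *\<^sub>v x) x)
    = Re (sesq n (cmat P) (\<lambda>i. x$i) (\<lambda>i. x$i)) + Re (sesq n (cmat P) (\<lambda>i. x$(n+i)) (\<lambda>i. x$(n+i)))"
  unfolding cinner_calP[OF spd_real_carrier[OF P] x x] by simp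

lemma calP_energy_Im:
  assumes P: "spd_real n P" and x: "x \<in> carrier_vec (2*n)"
  shows "Im (cinner (calP n P *\<^sub>v x) x) = 0"
  unfolding cinner_calP[OF spd_real_carrier[OF P] x x]
  using sesq_diag_Im[OF spd_real_sym[OF P]] by simp

lemma calP_energy_pos:
  assumes P: "spd_real n P" and x: "x \<in> carrier_vec (2*n)" "x \<noteq> 0\<^sub>v (2*n)"
  shows "Re (cinner (calP n P *\<^sub>v x) x) > 0"
proof -
  obtain i where i: "i < 2*n" "x $ i \<noteq> 0"
    using x by (metis carrier_vecD eq_vecI index_zero_vec(1,2))
  have "Re (sesq n (cmat P) (\<lambda>i. x$i) (\<lambda>i. x$i)) > 0
      \<or> Re (sesq n (cmat P) (\<lambda>i. x$(n+i)) (\<lambda>i. x$(n+i))) > 0"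
  proof (cases "i < n")
    case True
    then show ?thesis using sesq_diag_pos[OF P True, of "\<lambda>i. x$i"] i by auto
  next
    case False
    then have "i - n < n" "x $ (n + (i - n)) \<noteq> 0" using i by auto
    then show ?thesis using sesq_diag_pos[OF P, of "i-n" "\<lambda>i. x$(n+i)"] by auto
  qed
  then show ?thesis unfolding calP_energy[OF P x(1)] using sesq_diag_nonneg[OF P] by smt
qed

lemma pnorm_pos:
  assumes P: "spd_real n P" and x: "x \<in> nzvecs (2*n)"
  shows "pnorm (calP n P) x > 0"
  using calP_energy_pos[OF P] x unfolding pnorm_def nzvecs_def by auto

lemma calP_cauchy_schwarz:
  assumes P: "spd_real n P" and x: "x \<in> carrier_vec (2*n)" and w: "w \<in> carrier_vec (2*n)"
  shows "cmod (cinner (calP n P *\<^sub>v x) w) \<le> pnorm (calP n P) x * pnorm (calP n P) w"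
proof -
  let ?p = "sesq n (cmat P)"
  have "cmod (cinner (calP n P *\<^sub>v x) w)
      \<le> cmod (?p (\<lambda>i. x$i) (\<lambda>i. w$i)) + cmod (?p (\<lambda>i. x$(n+i)) (\<lambda>i. w$(n+i)))"
    unfolding cinner_calP[OF spd_real_carrier[OF P] x w] by (rule norm_triangle_ineq)
  also have "\<dots> \<le> pnorm (calP n P) x * pnorm (calP n P) w"
    unfolding pnorm_def calP_energy[OF P x] calP_energy[OF P w]
    by (intro sqrt_mult_add_le sesq_cauchy_schwarz[OF P] sesq_diag_nonneg[OF P])
  finally show ?thesis .
qed

lemma minv_if_energy_nonzero:
  fixes A :: "complex mat"
  assumes A: "A \<in> carrier_mat m m"
    and energy: "\<And>v. v \<in> carrier_vec m \<Longrightarrow> v \<noteq> 0\<^sub>v m \<Longrightarrow> cinner (A *\<^sub>v v) v \<noteq> 0"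
  shows "minv A * A = 1\<^sub>m m \<and> A * minv A = 1\<^sub>m m \<and> minv A \<in> carrier_mat m m"
proof -
  have "det A \<noteq> 0"
  proof
    assume "det A = 0"
    then obtain v where v: "v \<in> carrier_vec m" "v \<noteq> 0\<^sub>v m" "A *\<^sub>v v = 0\<^sub>v m"
      using det_0_iff_vec_prod_zero_field[OF A] by auto
    have "cinner (A *\<^sub>v v) v = 0"
      unfolding v(3) cinner_def using carrier_vec_conjugate[OF v(1)] by (rule scalar_prod_left_zero)
    then show False using energy[OF v(1,2)] by simp
  qed
  from det_non_zero_imp_unit[OF A this, of "()"]
  have U: "A \<in> Units (ring_mat TYPE(complex) m ())" .
  then obtain B where "mat_inverse A = Some B"
    by (cases "mat_inverse A") (use U mat_inverse(1)[OF A, where b="()"] in auto)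
  then show ?thesis using mat_inverse(2)[OF A] unfolding minv_def by auto
qed

lemma calP_minv:
  assumes P: "spd_real n P"
  shows "minv (calP n P) * calP n P = 1\<^sub>m (2*n) \<and> calP n P * minv (calP n P) = 1\<^sub>m (2*n)
         \<and> minv (calP n P) \<in> carrier_mat (2*n) (2*n)"
  using calP_energy_pos[OF P] calP_carrier[OF spd_real_carrier[OF P]]
  by (intro minv_if_energy_nonzero) force+

lemma eigenvalue_minv_mult_iff:
  assumes A: "A \<in> carrier_mat m m" and B: "B \<in> carrier_mat m m"
    and inv: "minv A * A = 1\<^sub>m m" "A * minv A = 1\<^sub>m m" "minv A \<in> carrier_mat m m"
  shows "eigenvalue (minv A * B) z \<longleftrightarrow>
    (\<exists>v. v \<in> carrier_vec m \<and> v \<noteq> 0\<^sub>v m \<and> B *\<^sub>v v = z \<cdot>\<^sub>v (A *\<^sub>v v))"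
proof -
  let ?Ai = "minv A"
  have AiB: "?Ai * B \<in> carrier_mat m m" using inv(3) B by simp
  have eq: "(?Ai * B) *\<^sub>v v = z \<cdot>\<^sub>v v \<longleftrightarrow> B *\<^sub>v v = z \<cdot>\<^sub>v (A *\<^sub>v v)" if v: "v \<in> carrier_vec m" for v
  proof
    assume h: "(?Ai * B) *\<^sub>v v = z \<cdot>\<^sub>v v"
    have "B *\<^sub>v v = ((A * ?Ai) * B) *\<^sub>v v" using inv(2) B by simp
    also have "\<dots> = A *\<^sub>v ((?Ai * B) *\<^sub>v v)"
      using A B inv(3) v by (simp add: assoc_mult_mat assoc_mult_mat_vec[OF A AiB v])
    also have "\<dots> = z \<cdot>\<^sub>v (A *\<^sub>v v)" unfolding h using A v by (simp add: mult_mat_vec)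
    finally show "B *\<^sub>v v = z \<cdot>\<^sub>v (A *\<^sub>v v)" .
  next
    assume h: "B *\<^sub>v v = z \<cdot>\<^sub>v (A *\<^sub>v v)"
    have "(?Ai * B) *\<^sub>v v = ?Ai *\<^sub>v (B *\<^sub>v v)" by (rule assoc_mult_mat_vec[OF inv(3) B v])
    also have "\<dots> = z \<cdot>\<^sub>v (?Ai *\<^sub>v (A *\<^sub>v v))" unfolding h using inv(3) A v by (simp add: mult_mat_vec)
    also have "?Ai *\<^sub>v (A *\<^sub>v v) = v" using assoc_mult_mat_vec[OF inv(3) A v] inv(1) v by simp
    finally show "(?Ai * B) *\<^sub>v v = z \<cdot>\<^sub>v v" .
  qed
  have "dim_row (?Ai * B) = m" using inv(3) by simp
  then show ?thesis unfolding eigenvalue_def eigenvector_def using eq by auto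
qed

lemma calP_eigenvalue_iff:
  assumes P: "spd_real n P" and M: "M \<in> carrier_mat n n" and K: "K \<in> carrier_mat n n"
  shows "eigenvalue (minv (calP n P) * calM n \<nu> \<omega> M K) z \<longleftrightarrow>
    (\<exists>v. v \<in> carrier_vec (2*n) \<and> v \<noteq> 0\<^sub>v (2*n) \<and> calM n \<nu> \<omega> M K *\<^sub>v v = z \<cdot>\<^sub>v (calP n P *\<^sub>v v))"
  using calP_minv[OF P]
  by (intro eigenvalue_minv_mult_iff calP_carrier[OF spd_real_carrier[OF P]] calM_carrier[OF M K]) auto

lemma cinner_smult:
  "u \<in> carrier_vec m \<Longrightarrow> w \<in> carrier_vec m \<Longrightarrow> cinner (k \<cdot>\<^sub>v u) w = k * cinner u w"
  unfolding cinner_def by (rule smult_scalar_prod_distrib) auto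

lemma cinner_ext:
  assumes a: "a \<in> carrier_vec m" and b: "b \<in> carrier_vec m"
    and eq: "\<And>w. w \<in> carrier_vec m \<Longrightarrow> cinner a w = cinner b w"
  shows "a = b"
proof (rule eq_vecI)
  fix i assume "i < dim_vec b"
  then have i: "i < m" using b by simp
  have unit: "conjugate (unit_vec m i) = (unit_vec m i :: complex vec)"
    by (rule eq_vecI) (auto simp: unit_vec_def)
  show "a $ i = b $ i"
    using eq[of "unit_vec m i"] i unfolding cinner_def unit by simp
qed (use a b in simp)

section \<open>Part (1): the spectrum is real and symmetric about zero\<close>

text \<open>\<open><\<M> x, x>\<close> is real: the off-diagonal blocks of \<open>\<M>\<close> are adjoint to each other.\<close>
lemma calM_energy_Im:
  assumes M: "spd_real n M" and K: "spd_real n K" and x: "x \<in> carrier_vec (2*n)"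
  shows "Im (cinner (calM n \<nu> \<omega> M K *\<^sub>v x) x) = 0"
proof -
  have SM: "sym_real n M" and SK: "sym_real n K" using M K spd_real_sym by auto
  show ?thesis
    unfolding cinner_calM[OF spd_real_carrier[OF M] spd_real_carrier[OF K] x x]
      sesq_hermitian[OF SK, of "\<lambda>i. x$(n+i)" "\<lambda>i. x$i"]
      sesq_hermitian[OF SM, of "\<lambda>i. x$(n+i)" "\<lambda>i. x$i"]
    using sesq_diag_Im[OF SM] by (simp add: algebra_simps)
qed

definition flip_conj :: "nat \<Rightarrow> complex vec \<Rightarrow> complex vec" where
  "flip_conj n v = vec (2*n) (\<lambda>i. if i < n then cnj (v $ (n+i)) else - cnj (v $ (i - n)))"

lemma flip_conj_carrier [simp]: "flip_conj n v \<in> carrier_vec (2*n)"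
  unfolding flip_conj_def by auto

lemma flip_conj_upper: "i < n \<Longrightarrow> flip_conj n v $ i = cnj (v $ (n+i))"
  unfolding flip_conj_def by auto

lemma flip_conj_lower: "i < n \<Longrightarrow> flip_conj n v $ (n+i) = - cnj (v $ i)"
  unfolding flip_conj_def by auto

lemma flip_conj_nonzero:
  assumes "v \<in> carrier_vec (2*n)" "v \<noteq> 0\<^sub>v (2*n)"
  shows "flip_conj n v \<noteq> 0\<^sub>v (2*n)"
proof
  assume J: "flip_conj n v = 0\<^sub>v (2*n)"
  have "v $ i = 0" if "i < 2*n" for i
  proof (cases "i < n")
    case True
    then have "flip_conj n v $ (n+i) = 0" using J by simp
    then show ?thesis using flip_conj_lower[OF True] by simp
  next
    case False
    then have "i - n < n" using that by simp
    then show ?thesis using J flip_conj_upper[of "i-n" n v] False that by auto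
  qed
  then have "v = 0\<^sub>v (2*n)" using assms(1) by (intro eq_vecI) auto
  then show False using assms by simp
qed

lemma sesq_flip_conj:
  "sesq n A (\<lambda>i. flip_conj n v $ i) y = sesq n A (\<lambda>i. cnj (v $ (n+i))) y"
  "sesq n A (\<lambda>i. flip_conj n v $ (n+i)) y = - sesq n A (\<lambda>i. cnj (v $ i)) y"
  "sesq n A y (\<lambda>i. flip_conj n w $ i) = sesq n A y (\<lambda>i. cnj (w $ (n+i)))"
  "sesq n A y (\<lambda>i. flip_conj n w $ (n+i)) = - sesq n A y (\<lambda>i. cnj (w $ i))"
  subgoal by (rule sesq_cong) (auto simp: flip_conj_upper)
  subgoal by (subst sesq_uminus_left[symmetric], rule sesq_cong) (auto simp: flip_conj_lower)
  subgoal by (rule sesq_cong) (auto simp: flip_conj_upper)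
  subgoal by (subst sesq_uminus_right[symmetric], rule sesq_cong) (auto simp: flip_conj_lower)
  done

lemma calM_flip_conj:
  assumes M: "M \<in> carrier_mat n n" and K: "K \<in> carrier_mat n n"
    and v: "v \<in> carrier_vec (2*n)" and w: "w \<in> carrier_vec (2*n)"
  shows "cinner (calM n \<nu> \<omega> M K *\<^sub>v flip_conj n v) w
    = cnj (cinner (calM n \<nu> \<omega> M K *\<^sub>v v) (flip_conj n w))"
  unfolding cinner_calM[OF M K flip_conj_carrier w] cinner_calM[OF M K v flip_conj_carrier]
    sesq_flip_conj
  by (simp add: sesq_conj[OF M] sesq_conj[OF K] algebra_simps)

lemma calP_flip_conj:
  assumes P: "P \<in> carrier_mat n n"
    and v: "v \<in> carrier_vec (2*n)" and w: "w \<in> carrier_vec (2*n)"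
  shows "cinner (calP n P *\<^sub>v flip_conj n v) w = - cnj (cinner (calP n P *\<^sub>v v) (flip_conj n w))"
  unfolding cinner_calP[OF P flip_conj_carrier w] cinner_calP[OF P v flip_conj_carrier]
    sesq_flip_conj
  by (simp add: sesq_conj[OF P] algebra_simps)

theorem spectrum_real_symmetric:
  assumes M: "spd_real n M" and K: "spd_real n K" and P: "spd_real n P"
    and ev: "eigenvalue (minv (calP n P) * calM n \<nu> \<omega> M K) z"
  shows "Im z = 0 \<and> eigenvalue (minv (calP n P) * calM n \<nu> \<omega> M K) (- z)"
proof -
  have Mc: "M \<in> carrier_mat n n" and Kc: "K \<in> carrier_mat n n" and Pc: "P \<in> carrier_mat n n"
    using M K P by (simp_all add: spd_real_carrier)
  have CP: "calP n P \<in> carrier_mat (2*n) (2*n)" and CM: "calM n \<nu> \<omega> M K \<in> carrier_mat (2*n) (2*n)"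
    using calP_carrier[OF Pc] calM_carrier[OF Mc Kc] .
  let ?M = "calM n \<nu> \<omega> M K" and ?P = "calP n P"
  obtain v where v: "v \<in> carrier_vec (2*n)" "v \<noteq> 0\<^sub>v (2*n)" "?M *\<^sub>v v = z \<cdot>\<^sub>v (?P *\<^sub>v v)"
    using ev calP_eigenvalue_iff[OF P Mc Kc] by auto
  have eig: "cinner (?M *\<^sub>v v) w = z * cinner (?P *\<^sub>v v) w" if "w \<in> carrier_vec (2*n)" for w
    unfolding v(3) using that CP v(1) by (simp add: cinner_smult[of _ "2*n"])
  have real: "Im z = 0"
  proof -
    have "Im (cinner (?M *\<^sub>v v) v) = 0" by (rule calM_energy_Im[OF M K v(1)])
    then have "Im (z * cinner (?P *\<^sub>v v) v) = 0" unfolding eig[OF v(1)] .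
    then have "Im z * Re (cinner (?P *\<^sub>v v) v) = 0" using calP_energy_Im[OF P v(1)] by simp
    then show ?thesis using calP_energy_pos[OF P v(1,2)] by simp
  qed
  let ?u = "flip_conj n v"
  have flipped: "cinner (?M *\<^sub>v ?u) w = cinner ((- z) \<cdot>\<^sub>v (?P *\<^sub>v ?u)) w"
    if w: "w \<in> carrier_vec (2*n)" for w
  proof -
    have "cinner (?M *\<^sub>v ?u) w = cnj z * cnj (cinner (?P *\<^sub>v v) (flip_conj n w))"
      unfolding calM_flip_conj[OF Mc Kc v(1) w] eig[OF flip_conj_carrier] by simp
    also have "cnj z = z" using real by (simp add: complex_eq_iff)
    finally show ?thesis
      using CP w by (simp add: cinner_smult[of _ "2*n"] calP_flip_conj[OF Pc v(1) w])
  qed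
  have "?M *\<^sub>v ?u = (- z) \<cdot>\<^sub>v (?P *\<^sub>v ?u)"
    using CM CP by (intro cinner_ext[OF _ _ flipped]) auto
  then have "eigenvalue (minv ?P * ?M) (- z)"
    unfolding calP_eigenvalue_iff[OF P Mc Kc] using flip_conj_nonzero[OF v(1,2)] flip_conj_carrier by blast
  then show ?thesis using real by simp
qed

section \<open>Part (2): the preconditioner \<open>P = M + \<surd>\<nu> (K + \<omega> M)\<close>\<close>

lemma spd_real_shifted:
  assumes M: "spd_real n M" and K: "spd_real n K" and t: "t \<ge> 0" and \<omega>: "\<omega> \<ge> 0"
  shows "spd_real n (M + t \<cdot>\<^sub>m (K + \<omega> \<cdot>\<^sub>m M))"
proof -
  let ?P = "M + t \<cdot>\<^sub>m (K + \<omega> \<cdot>\<^sub>m M)"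
  have Mc: "M \<in> carrier_mat n n" and Kc: "K \<in> carrier_mat n n" using M K by (simp_all add: spd_real_carrier)
  have SM: "sym_real n M" and SK: "sym_real n K" using M K spd_real_sym by auto
  have Pc: "?P \<in> carrier_mat n n" using Mc Kc by auto
  have "transpose_mat ?P = ?P"
    by (rule eq_matI) (use Pc Mc Kc SM SK in \<open>auto simp: sym_real_def\<close>)
  moreover have "x \<bullet> (?P *\<^sub>v x) > 0" if x: "x \<in> carrier_vec n" "x \<noteq> 0\<^sub>v n" for x
  proof -
    have "x \<bullet> (?P *\<^sub>v x) = x \<bullet> (M *\<^sub>v x) + t * (x \<bullet> (K *\<^sub>v x) + \<omega> * (x \<bullet> (M *\<^sub>v x)))"
      unfolding quadratic_form_sum[OF Pc x(1)] quadratic_form_sum[OF Mc x(1)]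
        quadratic_form_sum[OF Kc x(1)]
      using Mc Kc by (simp add: sum.distrib sum_distrib_left algebra_simps)
    moreover have "x \<bullet> (M *\<^sub>v x) > 0" "x \<bullet> (K *\<^sub>v x) > 0" using M K x unfolding spd_real_def by auto
    ultimately show ?thesis using t \<omega> by (simp add: add_pos_nonneg)
  qed
  ultimately show ?thesis using Pc unfolding spd_real_def by auto
qed

lemma sesq_shifted:
  assumes M: "M \<in> carrier_mat n n" and K: "K \<in> carrier_mat n n"
  shows "sesq n (cmat (M + t \<cdot>\<^sub>m (K + \<omega> \<cdot>\<^sub>m M))) y z
    = of_real (1 + t * \<omega>) * sesq n (cmat M) y z + of_real t * sesq n (cmat K) y z"
proof -
  have Pc: "M + t \<cdot>\<^sub>m (K + \<omega> \<cdot>\<^sub>m M) \<in> carrier_mat n n" using M K by auto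
  show ?thesis
    by (rule sesq_matrix_lincomb)
      (use M K in \<open>auto simp: cmat_index[OF Pc] cmat_index[OF M] cmat_index[OF K] algebra_simps\<close>)
qed

lemma calP_energy_shifted:
  assumes M: "M \<in> carrier_mat n n" and K: "K \<in> carrier_mat n n" and x: "x \<in> carrier_vec (2*n)"
  shows "Re (cinner (calP n (M + t \<cdot>\<^sub>m (K + \<omega> \<cdot>\<^sub>m M)) *\<^sub>v x) x)
    = (1 + t*\<omega>) * (Re (sesq n (cmat M) (\<lambda>i. x$i) (\<lambda>i. x$i))
                    + Re (sesq n (cmat M) (\<lambda>i. x$(n+i)) (\<lambda>i. x$(n+i))))
    + t * (Re (sesq n (cmat K) (\<lambda>i. x$i) (\<lambda>i. x$i))
           + Re (sesq n (cmat K) (\<lambda>i. x$(n+i)) (\<lambda>i. x$(n+i))))"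
proof -
  have Pc: "M + t \<cdot>\<^sub>m (K + \<omega> \<cdot>\<^sub>m M) \<in> carrier_mat n n" using M K by auto
  show ?thesis unfolding cinner_calP[OF Pc x x] sesq_shifted[OF M K] by (simp add: algebra_simps)
qed

lemma norm_block_expansion_le:
  fixes A B C D E F :: complex and t \<omega> :: real
  assumes t: "t \<ge> 0" and \<omega>: "\<omega> \<ge> 0"
  shows "cmod (A + (of_real t * B + (- of_real t * \<i> * of_real \<omega>) * C)
      + (of_real t * D + (of_real t * \<i> * of_real \<omega>) * E) - F)
    \<le> (cmod A + cmod F) + t * (cmod B + cmod D) + t * \<omega> * (cmod C + cmod E)"
proof -
  have "cmod (A + (of_real t * B + (- of_real t * \<i> * of_real \<omega>) * C)
      + (of_real t * D + (of_real t * \<i> * of_real \<omega>) * E) - F)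
    \<le> cmod A + (cmod (of_real t * B) + cmod ((- of_real t * \<i> * of_real \<omega>) * C))
      + (cmod (of_real t * D) + cmod ((of_real t * \<i> * of_real \<omega>) * E)) + cmod F"
    by (intro order_trans[OF norm_triangle_ineq4] add_mono order_trans[OF norm_triangle_ineq]
        order_refl norm_triangle_ineq)
  also have "\<dots> = (cmod A + cmod F) + t * (cmod B + cmod D) + t * \<omega> * (cmod C + cmod E)"
    using t \<omega> by (simp add: norm_mult algebra_simps)
  finally show ?thesis .
qed

text \<open>Each of the six block terms
  is bounded by Cauchy--Schwarz for \<open>M\<close> or \<open>K\<close>, and the bounds recombine exactly to the
  \<open>\<P>\<close>-energies of \<open>x\<close> and \<open>w\<close>.\<close>
lemma calM_continuity:
  assumes M: "spd_real n M" and K: "spd_real n K" and \<nu>: "\<nu> \<ge> 0" and \<omega>: "\<omega> \<ge> 0"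
    and x: "x \<in> carrier_vec (2*n)" and w: "w \<in> carrier_vec (2*n)"
  shows "cmod (cinner (calM n \<nu> \<omega> M K *\<^sub>v x) w)
     \<le> pnorm (calP n (M + sqrt \<nu> \<cdot>\<^sub>m (K + \<omega> \<cdot>\<^sub>m M))) x
       * pnorm (calP n (M + sqrt \<nu> \<cdot>\<^sub>m (K + \<omega> \<cdot>\<^sub>m M))) w"
proof -
  have Mc: "M \<in> carrier_mat n n" and Kc: "K \<in> carrier_mat n n" using M K by (simp_all add: spd_real_carrier)
  define t where "t = sqrt \<nu>"
  have t: "t \<ge> 0" "t * \<omega> \<ge> 0" unfolding t_def using \<nu> \<omega> by simp_all
  let ?m = "sesq n (cmat M)" and ?k = "sesq n (cmat K)"
  let ?x1 = "\<lambda>i. x$i" and ?x2 = "\<lambda>i. x$(n+i)" and ?w1 = "\<lambda>i. w$i" and ?w2 = "\<lambda>i. w$(n+i)"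
  note csM = sesq_cauchy_schwarz[OF M] and csK = sesq_cauchy_schwarz[OF K]
  note nonneg = sesq_diag_nonneg[OF M] sesq_diag_nonneg[OF K]
  have diag: "cmod (?m ?x1 ?w1) + cmod (?m ?x2 ?w2)
      \<le> sqrt (Re (?m ?x1 ?x1) + Re (?m ?x2 ?x2)) * sqrt (Re (?m ?w1 ?w1) + Re (?m ?w2 ?w2))"
    by (intro sqrt_mult_add_le csM nonneg)
  have offK: "t * (cmod (?k ?x2 ?w1) + cmod (?k ?x1 ?w2))
      \<le> sqrt (t * (Re (?k ?x2 ?x2) + Re (?k ?x1 ?x1))) * sqrt (t * (Re (?k ?w1 ?w1) + Re (?k ?w2 ?w2)))"
    by (intro sqrt_mult_scale sqrt_mult_add_le csK nonneg t)
  have offM: "t * \<omega> * (cmod (?m ?x2 ?w1) + cmod (?m ?x1 ?w2))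
      \<le> sqrt (t * \<omega> * (Re (?m ?x2 ?x2) + Re (?m ?x1 ?x1)))
        * sqrt (t * \<omega> * (Re (?m ?w1 ?w1) + Re (?m ?w2 ?w2)))"
    by (intro sqrt_mult_scale sqrt_mult_add_le csM nonneg t)
  have "cmod (cinner (calM n \<nu> \<omega> M K *\<^sub>v x) w)
      \<le> (cmod (?m ?x1 ?w1) + cmod (?m ?x2 ?w2)) + t * (cmod (?k ?x2 ?w1) + cmod (?k ?x1 ?w2))
        + t * \<omega> * (cmod (?m ?x2 ?w1) + cmod (?m ?x1 ?w2))"
    unfolding cinner_calM[OF Mc Kc x w] t_def[symmetric] by (rule norm_block_expansion_le[OF t(1) \<omega>])
  also have "\<dots> \<le> sqrt (Re (?m ?x1 ?x1) + Re (?m ?x2 ?x2) + t * (Re (?k ?x2 ?x2) + Re (?k ?x1 ?x1))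
        + t * \<omega> * (Re (?m ?x2 ?x2) + Re (?m ?x1 ?x1)))
      * sqrt (Re (?m ?w1 ?w1) + Re (?m ?w2 ?w2) + t * (Re (?k ?w1 ?w1) + Re (?k ?w2 ?w2))
        + t * \<omega> * (Re (?m ?w1 ?w1) + Re (?m ?w2 ?w2)))"
    using t by (intro sqrt_mult_add_le diag offK offM) (simp_all add: nonneg)
  also have "\<dots> = pnorm (calP n (M + t \<cdot>\<^sub>m (K + \<omega> \<cdot>\<^sub>m M))) x
      * pnorm (calP n (M + t \<cdot>\<^sub>m (K + \<omega> \<cdot>\<^sub>m M))) w"
    unfolding pnorm_def calP_energy_shifted[OF Mc Kc x] calP_energy_shifted[OF Mc Kc w]
    by (simp add: algebra_simps)
  finally show ?thesis unfolding t_def .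
qed

text \<open>The test vector \<open>W x = (x\<^sub>1 + (1 - \<i>) x\<^sub>2, (1 + \<i>) x\<^sub>1 - x\<^sub>2)\<close> realising the inf-sup bound.\<close>
definition test_vec :: "nat \<Rightarrow> complex vec \<Rightarrow> complex vec" where
  "test_vec n x = vec (2*n) (\<lambda>i. if i < n then 1 * x$i + (1 - \<i>) * x$(n+i)
                                 else (1 + \<i>) * x$(i-n) + (-1) * x$i)"

lemma test_vec_carrier [simp]: "test_vec n x \<in> carrier_vec (2*n)"
  unfolding test_vec_def by auto

lemma sesq_test_vec:
  "sesq n A (\<lambda>i. test_vec n x $ i) = sesq n A (\<lambda>i. 1 * x$i + (1 - \<i>) * x$(n+i))"
  "sesq n A y (\<lambda>i. test_vec n x $ i) = sesq n A y (\<lambda>i. 1 * x$i + (1 - \<i>) * x$(n+i))"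
  "sesq n A (\<lambda>i. test_vec n x $ (n+i)) = sesq n A (\<lambda>i. (1 + \<i>) * x$i + (-1) * x$(n+i))"
  "sesq n A y (\<lambda>i. test_vec n x $ (n+i)) = sesq n A y (\<lambda>i. (1 + \<i>) * x$i + (-1) * x$(n+i))"
  by (auto intro!: ext sesq_cong simp: test_vec_def)

lemma calM_test_vec:
  assumes M: "spd_real n M" and K: "spd_real n K" and x: "x \<in> carrier_vec (2*n)"
  shows "Re (cinner (calM n \<nu> \<omega> M K *\<^sub>v x) (test_vec n x))
    = Re (cinner (calP n (M + sqrt \<nu> \<cdot>\<^sub>m (K + \<omega> \<cdot>\<^sub>m M)) *\<^sub>v x) x)"
proof -
  have Mc: "M \<in> carrier_mat n n" and Kc: "K \<in> carrier_mat n n" using M K by (simp_all add: spd_real_carrier)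
  have SM: "sym_real n M" and SK: "sym_real n K" using M K spd_real_sym by auto
  show ?thesis
    unfolding cinner_calM[OF Mc Kc x test_vec_carrier] calP_energy_shifted[OF Mc Kc x]
      sesq_test_vec sesq_antilinear_right
      sesq_hermitian[OF SK, of "\<lambda>i. x$(n+i)" "\<lambda>i. x$i"]
      sesq_hermitian[OF SM, of "\<lambda>i. x$(n+i)" "\<lambda>i. x$i"]
    using sesq_diag_Im[OF SM] sesq_diag_Im[OF SK] by (simp add: algebra_simps)
qed

lemma calP_test_vec:
  assumes P: "spd_real n P" and x: "x \<in> carrier_vec (2*n)"
  shows "Re (cinner (calP n P *\<^sub>v test_vec n x) (test_vec n x)) = 3 * Re (cinner (calP n P *\<^sub>v x) x)"
proof -
  have SP: "sym_real n P" by (rule spd_real_sym[OF P])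
  show ?thesis
    unfolding calP_energy[OF P x] calP_energy[OF P test_vec_carrier] sesq_test_vec
      sesq_linear_left sesq_antilinear_right sesq_hermitian[OF SP, of "\<lambda>i. x$(n+i)" "\<lambda>i. x$i"]
    using sesq_diag_Im[OF SP] by (simp add: algebra_simps)
qed

lemma ratio_le_one:
  assumes M: "spd_real n M" and K: "spd_real n K" and \<nu>: "\<nu> > 0" and \<omega>: "\<omega> \<ge> 0"
    and x: "x \<in> nzvecs (2*n)" and w: "w \<in> nzvecs (2*n)"
  shows "ratio (calM n \<nu> \<omega> M K) (calP n (M + sqrt \<nu> \<cdot>\<^sub>m (K + \<omega> \<cdot>\<^sub>m M))) x w \<le> 1"
proof -
  let ?P = "M + sqrt \<nu> \<cdot>\<^sub>m (K + \<omega> \<cdot>\<^sub>m M)"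
  have P: "spd_real n ?P" using \<nu> \<omega> by (intro spd_real_shifted M K) auto
  have "cmod (cinner (calM n \<nu> \<omega> M K *\<^sub>v x) w) \<le> pnorm (calP n ?P) x * pnorm (calP n ?P) w"
    using \<nu> \<omega> x w by (intro calM_continuity M K) (auto simp: nzvecs_def)
  moreover have "pnorm (calP n ?P) x * pnorm (calP n ?P) w > 0"
    using pnorm_pos[OF P x] pnorm_pos[OF P w] by simp
  ultimately show ?thesis unfolding ratio_def by simp
qed

lemma ratio_test_vec:
  assumes M: "spd_real n M" and K: "spd_real n K" and \<nu>: "\<nu> > 0" and \<omega>: "\<omega> \<ge> 0"
    and x: "x \<in> nzvecs (2*n)"
  shows "test_vec n x \<in> nzvecs (2*n)"
    and "1 / sqrt 3 \<le> ratio (calM n \<nu> \<omega> M K) (calP n (M + sqrt \<nu> \<cdot>\<^sub>m (K + \<omega> \<cdot>\<^sub>m M))) x (test_vec n x)"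
proof -
  let ?P = "M + sqrt \<nu> \<cdot>\<^sub>m (K + \<omega> \<cdot>\<^sub>m M)"
  have P: "spd_real n ?P" using \<nu> \<omega> by (intro spd_real_shifted M K) auto
  have xc: "x \<in> carrier_vec (2*n)" "x \<noteq> 0\<^sub>v (2*n)" using x unfolding nzvecs_def by auto
  define R where "R = Re (cinner (calP n ?P *\<^sub>v x) x)"
  have R: "R > 0" unfolding R_def by (rule calP_energy_pos[OF P xc])
  have W: "Re (cinner (calP n ?P *\<^sub>v test_vec n x) (test_vec n x)) = 3 * R"
    unfolding R_def by (rule calP_test_vec[OF P xc(1)])
  show "test_vec n x \<in> nzvecs (2*n)"
  proof -
    have "test_vec n x \<noteq> 0\<^sub>v (2*n)"
      using W R calP_carrier[OF spd_real_carrier[OF P]] by (auto simp: cinner_def)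
    then show ?thesis unfolding nzvecs_def by simp
  qed
  have norms: "pnorm (calP n ?P) x * pnorm (calP n ?P) (test_vec n x) = sqrt 3 * R"
    unfolding pnorm_def W R_def[symmetric] using R by (simp add: real_sqrt_mult algebra_simps)
  have "R \<le> cmod (cinner (calM n \<nu> \<omega> M K *\<^sub>v x) (test_vec n x))"
    using complex_Re_le_cmod calM_test_vec[OF M K xc(1)] unfolding R_def by metis
  then have "R / (sqrt 3 * R) \<le> ratio (calM n \<nu> \<omega> M K) (calP n ?P) x (test_vec n x)"
    unfolding ratio_def norms using R by (intro divide_right_mono) auto
  then show "1 / sqrt 3 \<le> ratio (calM n \<nu> \<omega> M K) (calP n ?P) x (test_vec n x)"
    using R by simp
qed

section \<open>From the ratio bounds to the eigenvalues\<close>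

lemma ratio_eigenvector_le:
  assumes B: "B \<in> carrier_mat m m" and v: "v \<in> carrier_vec m" and w: "w \<in> carrier_vec m"
    and eig: "A *\<^sub>v v = z \<cdot>\<^sub>v (B *\<^sub>v v)"
    and cs: "cmod (cinner (B *\<^sub>v v) w) \<le> pnorm B v * pnorm B w"
  shows "ratio A B v w \<le> cmod z"
proof -
  have "ratio A B v w = cmod z * (cmod (cinner (B *\<^sub>v v) w) / (pnorm B v * pnorm B w))"
    unfolding ratio_def eig using B v w by (simp add: cinner_smult[of _ m] norm_mult)
  also have "\<dots> \<le> cmod z * 1"
  proof (intro mult_left_mono)
    show "cmod (cinner (B *\<^sub>v v) w) / (pnorm B v * pnorm B w) \<le> 1"
    proof (cases "pnorm B v * pnorm B w > 0")
      case True
      then show ?thesis using cs by simp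
    next
      case False
      then have "cmod (cinner (B *\<^sub>v v) w) = 0" using cs norm_ge_zero by (smt (verit))
      then show ?thesis by simp
    qed
  qed simp
  finally show ?thesis by simp
qed

lemma ratio_eigenvector_self:
  assumes B: "B \<in> carrier_mat m m" and v: "v \<in> carrier_vec m"
    and eig: "A *\<^sub>v v = z \<cdot>\<^sub>v (B *\<^sub>v v)"
    and pos: "Re (cinner (B *\<^sub>v v) v) > 0" "Im (cinner (B *\<^sub>v v) v) = 0"
  shows "ratio A B v v = cmod z"
proof -
  define R where "R = Re (cinner (B *\<^sub>v v) v)"
  have energy: "cinner (B *\<^sub>v v) v = of_real R" "R > 0"
    using pos unfolding R_def by (simp_all add: complex_eq_iff)
  have "ratio A B v v = cmod (z * of_real R) / (sqrt R * sqrt R)"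
    unfolding ratio_def pnorm_def eig R_def[symmetric] using B v
    by (simp add: cinner_smult[of _ m] energy(1))
  then show ?thesis using energy(2) by (simp add: norm_mult)
qed

text \<open>Eigenvalues for the preconditioner \<open>P = M + \<surd>\<nu> (K + \<omega> M)\<close> are real with
  \<open>1/\<surd>3 \<le> |z| \<le> 1\<close>: take \<open>w = v\<close> for the upper and \<open>w = W v\<close> for the lower bound.\<close>
lemma eigenvalue_bounds:
  assumes M: "spd_real n M" and K: "spd_real n K" and \<nu>: "\<nu> > 0" and \<omega>: "\<omega> \<ge> 0"
    and ev: "eigenvalue (minv (calP n (M + sqrt \<nu> \<cdot>\<^sub>m (K + \<omega> \<cdot>\<^sub>m M))) * calM n \<nu> \<omega> M K) z"
  shows "Im z = 0 \<and> 1 / sqrt 3 \<le> \<bar>Re z\<bar> \<and> \<bar>Re z\<bar> \<le> 1"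
proof -
  let ?P = "M + sqrt \<nu> \<cdot>\<^sub>m (K + \<omega> \<cdot>\<^sub>m M)"
  let ?r = "ratio (calM n \<nu> \<omega> M K) (calP n ?P)"
  have P: "spd_real n ?P" using \<nu> \<omega> by (intro spd_real_shifted M K) auto
  have CP: "calP n ?P \<in> carrier_mat (2*n) (2*n)" by (rule calP_carrier[OF spd_real_carrier[OF P]])
  have real: "Im z = 0" using spectrum_real_symmetric[OF M K P ev] by simp
  obtain v where v: "v \<in> carrier_vec (2*n)" "v \<noteq> 0\<^sub>v (2*n)"
    and eig: "calM n \<nu> \<omega> M K *\<^sub>v v = z \<cdot>\<^sub>v (calP n ?P *\<^sub>v v)"
    using ev calP_eigenvalue_iff[OF P spd_real_carrier[OF M] spd_real_carrier[OF K]] by auto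
  have vn: "v \<in> nzvecs (2*n)" using v unfolding nzvecs_def by simp
  have "cmod z = ?r v v"
    by (rule ratio_eigenvector_self[OF CP v(1) eig calP_energy_pos[OF P v] calP_energy_Im[OF P v(1)],
          symmetric])
  also have "\<dots> \<le> 1" by (rule ratio_le_one[OF M K \<nu> \<omega> vn vn])
  finally have upper: "cmod z \<le> 1" .
  have "1 / sqrt 3 \<le> ?r v (test_vec n v)" by (rule ratio_test_vec(2)[OF M K \<nu> \<omega> vn])
  also have "\<dots> \<le> cmod z"
    by (rule ratio_eigenvector_le[OF CP v(1) test_vec_carrier eig
          calP_cauchy_schwarz[OF P v(1) test_vec_carrier]])
  finally have lower: "1 / sqrt 3 \<le> cmod z" .
  have "cmod z = \<bar>Re z\<bar>" using real by (simp add: cmod_def)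
  then show ?thesis using real upper lower by simp
qed

lemma inf_sup_bounds:
  fixes f :: "'a \<Rightarrow> 'a \<Rightarrow> real"
  assumes ne: "S \<noteq> {}" and le: "\<And>x w. x \<in> S \<Longrightarrow> w \<in> S \<Longrightarrow> f x w \<le> c"
    and witness: "\<And>x. x \<in> S \<Longrightarrow> \<exists>w\<in>S. d \<le> f x w"
  shows "d \<le> (INF x\<in>S. SUP w\<in>S. f x w)" and "(SUP x\<in>S. SUP w\<in>S. f x w) \<le> c"
proof -
  show "d \<le> (INF x\<in>S. SUP w\<in>S. f x w)"
  proof (rule cINF_greatest[OF ne])
    fix x assume x: "x \<in> S"
    then obtain w where w: "w \<in> S" "d \<le> f x w" using witness by blast
    have "bdd_above (f x ` S)" using le[OF x] by (intro bdd_aboveI2) auto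
    then show "d \<le> (SUP w\<in>S. f x w)" using w(1) by (rule cSUP_upper2) (rule w(2))
  qed
  show "(SUP x\<in>S. SUP w\<in>S. f x w) \<le> c"
  proof (rule cSUP_least[OF ne])
    fix x assume "x \<in> S"
    then show "(SUP w\<in>S. f x w) \<le> c" by (intro cSUP_least[OF ne] le)
  qed
qed

theorem theorem5:
  fixes n :: nat and M K :: "real mat" and \<nu> \<omega> :: real
  assumes "n > 0"
    and "spd_real n M" and "spd_real n K"
    and "\<nu> > 0" and "\<omega> \<ge> 0"
  shows
    "(\<forall>P. spd_real n P \<longrightarrow>
        (\<forall>z. eigenvalue (minv (calP n P) * calM n \<nu> \<omega> M K) z \<longrightarrow>
              Im z = 0 \<and> eigenvalue (minv (calP n P) * calM n \<nu> \<omega> M K) (- z)))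
     \<and> (let P = M + sqrt \<nu> \<cdot>\<^sub>m (K + \<omega> \<cdot>\<^sub>m M) in
          infsup_const (2 * n) (calM n \<nu> \<omega> M K) (calP n P) \<ge> 1 / sqrt 3
        \<and> bnorm (2 * n) (calM n \<nu> \<omega> M K) (calP n P) \<le> 1
        \<and> (\<forall>z. eigenvalue (minv (calP n P) * calM n \<nu> \<omega> M K) z \<longrightarrow>
              Im z = 0 \<and> 1 / sqrt 3 \<le> \<bar>Re z\<bar> \<and> \<bar>Re z\<bar> \<le> 1))"
proof -
  note M = assms(2) and K = assms(3) and \<nu> = assms(4) and \<omega> = assms(5)
  let ?r = "ratio (calM n \<nu> \<omega> M K) (calP n (M + sqrt \<nu> \<cdot>\<^sub>m (K + \<omega> \<cdot>\<^sub>m M)))"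
  have "unit_vec (2*n) 0 $ 0 \<noteq> (0\<^sub>v (2*n) :: complex vec) $ 0" using assms(1) by simp
  then have "unit_vec (2*n) 0 \<in> nzvecs (2*n)" unfolding nzvecs_def by auto
  then have ne: "nzvecs (2*n) \<noteq> {}" by blast
  have witness: "\<exists>w\<in>nzvecs (2*n). 1 / sqrt 3 \<le> ?r x w" if "x \<in> nzvecs (2*n)" for x
    using ratio_test_vec[OF M K \<nu> \<omega> that] by blast
  note bounds = inf_sup_bounds[OF ne ratio_le_one[OF M K \<nu> \<omega>] witness]
  have part1: "\<forall>P. spd_real n P \<longrightarrow> (\<forall>z. eigenvalue (minv (calP n P) * calM n \<nu> \<omega> M K) z \<longrightarrow>
      Im z = 0 \<and> eigenvalue (minv (calP n P) * calM n \<nu> \<omega> M K) (- z))"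
    using spectrum_real_symmetric[OF M K] by simp
  have eigenvalues: "\<forall>z. eigenvalue (minv (calP n (M + sqrt \<nu> \<cdot>\<^sub>m (K + \<omega> \<cdot>\<^sub>m M))) * calM n \<nu> \<omega> M K) z
      \<longrightarrow> Im z = 0 \<and> 1 / sqrt 3 \<le> \<bar>Re z\<bar> \<and> \<bar>Re z\<bar> \<le> 1"
    using eigenvalue_bounds[OF M K \<nu> \<omega>] by simp
  show ?thesis
    unfolding infsup_const_def bnorm_def Let_def by (intro conjI part1 bounds eigenvalues)
qed

end
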